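(* Algorithm 1 requires $\widetilde{O}(m n^{1/\alpha}/\varepsilon + n)$ space with probability at least $1-1/m^2$.
   Context: Algorithm 1. Input: a stream of sets $S_1,\dots,S_m\subseteq[n]$, an integer $\alpha\ge1$, a parameter $\varepsilon>0$, and a number $\widetilde{\mathrm{opt}}$ with $\mathrm{opt}\le\widetilde{\mathrm{opt}}\le(1+\varepsilon)\mathrm{opt}$, where $\mathrm{opt}$ is the minimum number of input sets covering $[n]$. (1) Set $U\leftarrow[n]$, $\mathrm{SOL}\leftarrow\emptyset$. (2) In one pass, for each $S_i$ with $|S_i\cap U|\ge n/(\varepsilon\,\widetilde{\mathrm{opt}})$: add $i$ to $\mathrm{SOL}$ and set $U\leftarrow U\setminus S_i$. (3) For $j=1,\dots,\alpha$: (a) let $U_{\mathrm{smpl}}\subseteq U$ contain each element of $U$ independently with probability $p=16\,\widetilde{\mathrm{opt}}\log m/n^{1-1/\alpha}$; (b) in one pass, store $S'_i=S_i\cap U_{\mathrm{smpl}}$ for all $i\in[m]$; (c) compute an optimal set cover $\mathrm{OPT}'$ of the instance $(S'_1,\dots,S'_m)$ on universe $U_{\mathrm{smpl}}$ and add its indices to $\mathrm{SOL}$; (d) in another pass, set $U\leftarrow U\setminus\bigcup_{i\in\mathrm{OPT}'}S_i$. (4) Return $\mathrm{SOL}$. Space is in bits; $\widetilde{O}$ hides polylogarithmic factors in $n,m$. *)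

theory Defs
  imports "HOL-Probability.Probability"
begin

text \<open>Set cover instances: universe [n] = {1..n}, sets S 1, ..., S m (indices {1..m}).\<close>

definition covers :: "(nat \<Rightarrow> nat set) \<Rightarrow> nat set \<Rightarrow> nat set \<Rightarrow> bool" where
  "covers S I V \<longleftrightarrow> V \<subseteq> (\<Union>i\<in>I. S i)"

definition opt_cover :: "nat \<Rightarrow> nat \<Rightarrow> (nat \<Rightarrow> nat set) \<Rightarrow> nat" where
  "opt_cover n m S = Min {card I | I. I \<subseteq> {1..m} \<and> covers S I {1..n}}"

definition is_opt_cover :: "nat \<Rightarrow> (nat \<Rightarrow> nat set) \<Rightarrow> nat set \<Rightarrow> nat set \<Rightarrow> bool" where
  "is_opt_cover m T V I \<longleftrightarrow> I \<subseteq> {1..m} \<and> covers T I V \<and>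
     (\<forall>J. J \<subseteq> {1..m} \<and> covers T J V \<longrightarrow> card I \<le> card J)"

text \<open>An (arbitrary, deterministic) exact set-cover subroutine used in step (3c).\<close>
definition opt_oracle :: "nat \<Rightarrow> ((nat \<Rightarrow> nat set) \<Rightarrow> nat set \<Rightarrow> nat set) \<Rightarrow> bool" where
  "opt_oracle m oc \<longleftrightarrow> (\<forall>T V. covers T {1..m} V \<longrightarrow> is_opt_cover m T V (oc T V))"

definition sample_set :: "nat set \<Rightarrow> real \<Rightarrow> nat set pmf" where
  "sample_set U q = map_pmf (\<lambda>f. {x\<in>U. f x}) (Pi_pmf U False (\<lambda>_. bernoulli_pmf q))"

definition wlen :: "nat \<Rightarrow> nat" where
  "wlen k = nat \<lceil>log 2 (real k + 1)\<rceil>"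

definition step2 :: "nat \<Rightarrow> nat \<Rightarrow> (nat \<Rightarrow> nat set) \<Rightarrow> real \<Rightarrow> nat set \<times> nat set" where
  "step2 n m S thr = foldl (\<lambda>(U, SOL) i. if real (card (S i \<inter> U)) \<ge> thr
                                         then (U - S i, insert i SOL) else (U, SOL))
                      ({1..n}, {}) [1..<m+1]"

text \<open>Memory (bits) while in step (2) with current solution SOL: bit vector of U plus indices.\<close>
definition space_step2 :: "nat \<Rightarrow> nat \<Rightarrow> nat set \<Rightarrow> nat" where
  "space_step2 n m SOL = n + card SOL * wlen m"

text \<open>Memory (bits) in an iteration of step (3): bit vectors of U and U_smpl, the indices in SOL,
  and the stored sets S'_i (as lists of elements, with a delimiter per set).\<close>
definition space_iter :: "nat \<Rightarrow> nat \<Rightarrow> nat set \<Rightarrow> (nat \<Rightarrow> nat set) \<Rightarrow> nat" where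
  "space_iter n m SOL T = 2 * n + card SOL * wlen m + (\<Sum>i=1..m. card (T i) + 1) * wlen n"

text \<open>State: (U, SOL, peak space so far). One iteration (3a)-(3d) with sampling probability q.\<close>
definition iter_step :: "nat \<Rightarrow> nat \<Rightarrow> (nat \<Rightarrow> nat set) \<Rightarrow> real \<Rightarrow>
    ((nat \<Rightarrow> nat set) \<Rightarrow> nat set \<Rightarrow> nat set) \<Rightarrow> nat set \<times> nat set \<times> nat \<Rightarrow>
    (nat set \<times> nat set \<times> nat) pmf" where
  "iter_step n m S q oc st = (case st of (U, SOL, sp) \<Rightarrow>
     bind_pmf (sample_set U q) (\<lambda>Us.
       let T = (\<lambda>i. S i \<inter> Us); Opt = oc T Us; SOL' = SOL \<union> Opt
       in return_pmf (U - (\<Union>i\<in>Opt. S i), SOL', max sp (space_iter n m SOL' T))))"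

primrec run_iters :: "nat \<Rightarrow> nat \<Rightarrow> (nat \<Rightarrow> nat set) \<Rightarrow> real \<Rightarrow>
    ((nat \<Rightarrow> nat set) \<Rightarrow> nat set \<Rightarrow> nat set) \<Rightarrow> nat \<Rightarrow> nat set \<times> nat set \<times> nat \<Rightarrow>
    (nat set \<times> nat set \<times> nat) pmf" where
  "run_iters n m S q oc 0 st = return_pmf st"
| "run_iters n m S q oc (Suc j) st = bind_pmf (run_iters n m S q oc j st) (iter_step n m S q oc)"

definition alg1_space :: "nat \<Rightarrow> nat \<Rightarrow> (nat \<Rightarrow> nat set) \<Rightarrow> nat \<Rightarrow> real \<Rightarrow> real \<Rightarrow>
    ((nat \<Rightarrow> nat set) \<Rightarrow> nat set \<Rightarrow> nat set) \<Rightarrow> nat pmf" where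
  "alg1_space n m S \<alpha> \<epsilon> optt oc =
     (let (U0, SOL0) = step2 n m S (real n / (\<epsilon> * optt));
          p = 16 * optt * log 2 (real m) / (real n powr (1 - 1 / real \<alpha>));
          q = min 1 (max 0 p)
      in map_pmf (\<lambda>(U, SOL, sp). sp)
           (run_iters n m S q oc \<alpha> (U0, SOL0, space_step2 n m SOL0)))"

end

theory Submission
  imports Defs
begin

text \<open>
  After the threshold pass every set meets the uncovered set \<open>U\<close> in at most
  \<open>thr = n / (\<epsilon> opt~)\<close> elements. Weight each element by its degree divided by \<open>2m\<close> and let
  \<open>\<Phi>(A)\<close> be the total weight of \<open>A\<close>: the sets stored for a sample \<open>Us\<close> occupy
  \<open>2m \<Phi>(Us)\<close> words, and \<open>\<Phi>(U) \<le> thr/2\<close>. Since \<open>Us\<close> is covered by \<open>OPT'\<close>, the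
  potential of the uncovered set drops by at least \<open>\<Phi>(Us)\<close> in every iteration. By induction on
  the number of iterations, the probability that some iteration has \<open>\<Phi>(Us) \<ge> t\<close> is at most
  \<open>c \<Phi>(U\<^sub>0)\<close> with \<open>c = 2 exp(q thr) / (exp t - 1)\<close>: Markov's inequality for \<open>exp \<Phi>(Us)\<close>,
  whose mean is at most \<open>exp (2 q \<Phi>(U))\<close>, pays for the current iteration, and the expected
  drop \<open>q \<Phi>(U)\<close> of the potential pays for the later ones. For
  \<open>t = q thr + ln (n m\<^sup>2 + 1)\<close> this is at most \<open>1/m\<^sup>2\<close>, and \<open>q thr = O(n powr (1/\<alpha>) log m / \<epsilon>)\<close>.
\<close>

lemma set_pmf_sample_set_subset: "Us \<in> set_pmf (sample_set U q) \<Longrightarrow> Us \<subseteq> U"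
  unfolding sample_set_def by auto

lemma finite_set_pmf_sample_set: "finite U \<Longrightarrow> finite (set_pmf (sample_set U q))"
  by (meson Pow_iff finite_Pow_iff finite_subset set_pmf_sample_set_subset subsetI)

lemma expectation_sum_sample_set:
  fixes w :: "nat \<Rightarrow> real"
  assumes U: "finite U" and q: "0 \<le> q" "q \<le> 1"
  shows "measure_pmf.expectation (sample_set U q) (\<lambda>Us. \<Sum>x\<in>Us. w x) = q * (\<Sum>x\<in>U. w x)"
proof -
  let ?P = "Pi_pmf U False (\<lambda>_. bernoulli_pmf q)"
  have "measure_pmf.expectation (sample_set U q) (\<lambda>Us. \<Sum>x\<in>Us. w x)
      = measure_pmf.expectation ?P (\<lambda>f. \<Sum>x\<in>U. if f x then w x else 0)"
    unfolding sample_set_def using U by (simp add: sum.inter_filter)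
  also have "\<dots> = (\<Sum>x\<in>U. measure_pmf.expectation ?P (\<lambda>f. if f x then w x else 0))"
    by (rule Bochner_Integration.integral_sum)
       (auto intro!: integrable_measure_pmf_finite finite_PiE_dflt simp: U set_Pi_pmf)
  also have "\<dots> = (\<Sum>x\<in>U. measure_pmf.expectation (map_pmf (\<lambda>f. f x) ?P) (\<lambda>b. if b then w x else 0))"
    by simp
  also have "\<dots> = (\<Sum>x\<in>U. q * w x)"
    using U q by (intro sum.cong refl) (simp add: Pi_pmf_component)
  finally show ?thesis by (simp add: sum_distrib_left)
qed

lemma expectation_exp_sum_sample_set:
  fixes w :: "nat \<Rightarrow> real"
  assumes U: "finite U" and q: "0 \<le> q" "q \<le> 1"
  shows "measure_pmf.expectation (sample_set U q) (\<lambda>Us. exp (\<Sum>x\<in>Us. w x))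
       = (\<Prod>x\<in>U. 1 + q * (exp (w x) - 1))"
proof -
  have "measure_pmf.expectation (sample_set U q) (\<lambda>Us. exp (\<Sum>x\<in>Us. w x))
      = measure_pmf.expectation (Pi_pmf U False (\<lambda>_. bernoulli_pmf q))
          (\<lambda>f. \<Prod>x\<in>U. (\<lambda>x b. if b then exp (w x) else 1) x (f x))"
    unfolding sample_set_def using U by (simp add: exp_sum prod.inter_filter)
  also have "\<dots> = (\<Prod>x\<in>U. measure_pmf.expectation (bernoulli_pmf q) (\<lambda>b. if b then exp (w x) else 1))"
    by (rule expectation_prod_Pi_pmf) (auto simp: U integrable_measure_pmf_finite)
  finally show ?thesis
    using q by (simp add: algebra_simps)
qed

lemma expectation_exp_sum_sample_set_le:
  fixes w :: "nat \<Rightarrow> real"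
  assumes U: "finite U" and q: "0 \<le> q" "q \<le> 1" and w: "\<And>x. 0 \<le> w x" "\<And>x. w x \<le> 1/2"
  shows "measure_pmf.expectation (sample_set U q) (\<lambda>Us. exp (\<Sum>x\<in>Us. w x))
       \<le> exp (2 * q * (\<Sum>x\<in>U. w x))"
proof -
  have "1 + q * (exp (w x) - 1) \<le> exp (2 * q * w x)" for x
  proof -
    have "exp (w x) \<le> 1 + 2 * w x"
      using exp_bound_lemma[of "w x"] w[of x] by simp
    then have "1 + q * (exp (w x) - 1) \<le> 1 + q * (2 * w x)"
      using q by (intro add_left_mono mult_left_mono) auto
    also have "\<dots> \<le> exp (2 * q * w x)"
      using exp_ge_add_one_self[of "2 * q * w x"] by (simp add: algebra_simps)
    finally show ?thesis .
  qed
  moreover have "0 \<le> 1 + q * (exp (w x) - 1)" for x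
    using q w(1)[of x] by simp
  ultimately have "(\<Prod>x\<in>U. 1 + q * (exp (w x) - 1)) \<le> (\<Prod>x\<in>U. exp (2 * q * w x))"
    by (intro prod_mono) auto
  then show ?thesis
    using U by (simp add: expectation_exp_sum_sample_set[OF U q] exp_sum sum_distrib_left)
qed

lemma prob_bind_pmf:
  "measure_pmf.prob (bind_pmf p f) A = measure_pmf.expectation p (\<lambda>x. measure_pmf.prob (f x) A)"
proof -
  have "ennreal (measure_pmf.prob (bind_pmf p f) A) = (\<integral>\<^sup>+x. ennreal (measure_pmf.prob (f x) A) \<partial>p)"
    using emeasure_bind_pmf[of p f A] by (simp only: measure_pmf.emeasure_eq_measure)
  also have "\<dots> = ennreal (measure_pmf.expectation p (\<lambda>x. measure_pmf.prob (f x) A))"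
    by (intro nn_integral_eq_integral measure_pmf.integrable_const_bound[where B = 1]) auto
  finally show ?thesis
    by (simp add: ennreal_inj Bochner_Integration.integral_nonneg)
qed

lemma foldl_threshold_pass:
  fixes thr :: real
  assumes "foldl (\<lambda>(U, SOL) i. if real (card (S i \<inter> U)) \<ge> thr
                 then (U - S i, insert i SOL) else (U, SOL)) (U, SOL) xs = (U', SOL')"
    and "finite U"
  shows "U' \<subseteq> U \<and> SOL' \<subseteq> SOL \<union> set xs \<and> (\<forall>i\<in>set xs. real (card (S i \<inter> U')) \<le> max 0 thr)"
  using assms
proof (induction xs arbitrary: U SOL)
  case Nil
  then show ?case by simp
next
  case (Cons x xs)
  define U1 where "U1 = (if real (card (S x \<inter> U)) \<ge> thr then U - S x else U)"
  define SOL1 where "SOL1 = (if real (card (S x \<inter> U)) \<ge> thr then insert x SOL else SOL)"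
  have "foldl (\<lambda>(U, SOL) i. if real (card (S i \<inter> U)) \<ge> thr
                 then (U - S i, insert i SOL) else (U, SOL)) (U1, SOL1) xs = (U', SOL')"
    using Cons.prems(1) by (cases "thr \<le> real (card (S x \<inter> U))") (simp_all add: U1_def SOL1_def)
  moreover have "finite U1" using Cons.prems(2) by (simp add: U1_def)
  ultimately have IH: "U' \<subseteq> U1 \<and> SOL' \<subseteq> SOL1 \<union> set xs
      \<and> (\<forall>i\<in>set xs. real (card (S i \<inter> U')) \<le> max 0 thr)"
    by (rule Cons.IH)
  have "card (S x \<inter> U') \<le> card (S x \<inter> U1)"
    using IH \<open>finite U1\<close> by (intro card_mono) auto
  moreover have "real (card (S x \<inter> U1)) \<le> max 0 thr"
    by (auto simp: U1_def)
  ultimately have "real (card (S x \<inter> U')) \<le> max 0 thr" by linarith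
  then show ?case using IH by (auto simp: U1_def SOL1_def split: if_splits)
qed

lemma step2_result:
  assumes "step2 n m S thr = (U0, SOL0)"
  shows "U0 \<subseteq> {1..n}" "SOL0 \<subseteq> {1..m}" "\<forall>i\<in>{1..m}. real (card (S i \<inter> U0)) \<le> max 0 thr"
proof -
  have "set [1..<m+1] = {1..m}" by auto
  then show "U0 \<subseteq> {1..n}" "SOL0 \<subseteq> {1..m}" "\<forall>i\<in>{1..m}. real (card (S i \<inter> U0)) \<le> max 0 thr"
    using foldl_threshold_pass[where U = "{1..n}" and SOL = "{}" and xs = "[1..<m+1]"] assms
    unfolding step2_def by auto
qed

lemma sum_card_inter_eq_sum_card_containing:
  assumes "finite I" "finite A"
  shows "(\<Sum>i\<in>I. card (S i \<inter> A)) = (\<Sum>x\<in>A. card {i\<in>I. x \<in> S i})"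
proof -
  have "(\<Sum>i\<in>I. card (S i \<inter> A)) = (\<Sum>i\<in>I. \<Sum>x\<in>A. of_bool (x \<in> S i))"
    using assms by (simp add: Int_def conj_commute)
  also have "\<dots> = (\<Sum>x\<in>A. \<Sum>i\<in>I. of_bool (x \<in> S i))"
    by (rule sum.swap)
  also have "\<dots> = (\<Sum>x\<in>A. card {i\<in>I. x \<in> S i})"
    using assms by (simp add: Int_def)
  finally show ?thesis .
qed

definition degree_weight :: "nat \<Rightarrow> (nat \<Rightarrow> nat set) \<Rightarrow> nat \<Rightarrow> real" where
  "degree_weight m S x = real (card {i\<in>{1..m}. x \<in> S i}) / (2 * real m)"

definition potential :: "nat \<Rightarrow> (nat \<Rightarrow> nat set) \<Rightarrow> nat set \<Rightarrow> real" where
  "potential m S A = (\<Sum>x\<in>A. degree_weight m S x)"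

lemma degree_weight_nonneg: "0 \<le> degree_weight m S x"
  by (simp add: degree_weight_def)

lemma degree_weight_le_half: "degree_weight m S x \<le> 1/2"
proof (cases "m = 0")
  case False
  have "card {i\<in>{1..m}. x \<in> S i} \<le> card {1..m}" by (intro card_mono) auto
  then show ?thesis using False by (simp add: degree_weight_def field_simps)
qed (simp add: degree_weight_def)

lemma potential_nonneg: "0 \<le> potential m S A"
  by (simp add: potential_def sum_nonneg degree_weight_nonneg)

lemma potential_le_half_card: "potential m S A \<le> real (card A) / 2"
  using sum_mono[of A "degree_weight m S" "\<lambda>_. 1/2"] degree_weight_le_half
  by (simp add: potential_def)

lemma potential_mono: "finite B \<Longrightarrow> A \<subseteq> B \<Longrightarrow> potential m S A \<le> potential m S B"
  unfolding potential_def by (intro sum_mono2) (auto simp: degree_weight_nonneg)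

lemma potential_diff:
  "finite B \<Longrightarrow> A \<subseteq> B \<Longrightarrow> potential m S (B - A) = potential m S B - potential m S A"
  unfolding potential_def by (simp add: sum_diff)

lemma sum_card_inter_eq_potential:
  assumes "finite A" "m \<ge> 1"
  shows "real (\<Sum>i=1..m. card (S i \<inter> A)) = 2 * real m * potential m S A"
  using assms
  by (simp add: sum_card_inter_eq_sum_card_containing potential_def degree_weight_def sum_distrib_left)

lemma potential_le_half_threshold:
  assumes "finite A" "m \<ge> 1" "\<forall>i\<in>{1..m}. real (card (S i \<inter> A)) \<le> thr"
  shows "potential m S A \<le> thr / 2"
proof -
  have "real (\<Sum>i=1..m. card (S i \<inter> A)) \<le> (\<Sum>i=1..m. thr)"
    unfolding of_nat_sum using assms(3) by (intro sum_mono) auto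
  then show ?thesis
    using sum_card_inter_eq_potential[OF assms(1,2), of S] assms(2) by simp
qed

definition space_budget :: "nat \<Rightarrow> nat \<Rightarrow> real \<Rightarrow> real" where
  "space_budget n m t = 2 * real n + real m * real (wlen m) + (2 * real m * t + real m) * real (wlen n)"

lemma space_step2_le_space_budget:
  assumes "SOL \<subseteq> {1..m}" "0 \<le> t"
  shows "real (space_step2 n m SOL) \<le> space_budget n m t"
proof -
  have "card SOL \<le> m" using card_mono[OF _ assms(1)] by simp
  then have "real (card SOL) * real (wlen m) \<le> real m * real (wlen m)"
    by (intro mult_right_mono) auto
  moreover have "0 \<le> (2 * real m * t + real m) * real (wlen n)"
    using assms(2) by simp
  ultimately show ?thesis by (simp add: space_budget_def space_step2_def)
qed

lemma space_iter_le_space_budget: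
  assumes "finite Us" "SOL \<subseteq> {1..m}" "m \<ge> 1" "potential m S Us \<le> t"
  shows "real (space_iter n m SOL (\<lambda>i. S i \<inter> Us)) \<le> space_budget n m t"
proof -
  have "card SOL \<le> m" using card_mono[OF _ assms(2)] by simp
  have "real (\<Sum>i=1..m. card (S i \<inter> Us) + 1) = 2 * real m * potential m S Us + real m"
    using sum_card_inter_eq_potential[OF assms(1,3)] by (simp add: sum.distrib)
  also have "\<dots> \<le> 2 * real m * t + real m"
    using assms(4) by (simp add: mult_left_mono)
  finally show ?thesis
    using \<open>card SOL \<le> m\<close> unfolding space_iter_def space_budget_def of_nat_add of_nat_mult
    by (intro add_mono mult_right_mono order.refl) auto
qed

lemma opt_oracle_covers_sample:
  assumes "opt_oracle m oc" "(\<Union>i\<in>{1..m}. S i) = V" "Us \<subseteq> V"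
  shows "oc (\<lambda>i. S i \<inter> Us) Us \<subseteq> {1..m}" "Us \<subseteq> (\<Union>i\<in>oc (\<lambda>i. S i \<inter> Us) Us. S i)"
proof -
  have "covers (\<lambda>i. S i \<inter> Us) {1..m} Us"
    using assms(2,3) unfolding covers_def by blast
  then have "is_opt_cover m (\<lambda>i. S i \<inter> Us) Us (oc (\<lambda>i. S i \<inter> Us) Us)"
    using assms(1) unfolding opt_oracle_def by blast
  then show "oc (\<lambda>i. S i \<inter> Us) Us \<subseteq> {1..m}" "Us \<subseteq> (\<Union>i\<in>oc (\<lambda>i. S i \<inter> Us) Us. S i)"
    unfolding is_opt_cover_def covers_def by auto
qed

lemma run_iters_Suc_first:
  "run_iters n m S q oc (Suc j) st = bind_pmf (iter_step n m S q oc st) (run_iters n m S q oc j)"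
proof (induction j arbitrary: st)
  case 0
  then show ?case by (simp add: bind_return_pmf bind_return_pmf')
next
  case (Suc j)
  then show ?case
    by (simp only: run_iters.simps(2) bind_assoc_pmf)
qed

definition overflow_rate :: "real \<Rightarrow> real \<Rightarrow> real \<Rightarrow> real" where
  "overflow_rate q thr t = 2 * exp (q * thr) / (exp t - 1)"

lemma overflow_rate_nonneg: "0 < t \<Longrightarrow> 0 \<le> overflow_rate q thr t"
  by (simp add: overflow_rate_def)

lemma expectation_overflow_le:
  assumes U: "finite U" and m: "m \<ge> 1" and q: "0 \<le> q" "q \<le> 1" and t: "0 < t"
    and thr: "\<forall>i\<in>{1..m}. real (card (S i \<inter> U)) \<le> thr"
  shows "measure_pmf.expectation (sample_set U q) (\<lambda>Us. (exp (potential m S Us) - 1) / (exp t - 1))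
       \<le> overflow_rate q thr t * (q * potential m S U)"
proof -
  define F where "F = potential m S U"
  have F: "0 \<le> F" "2 * F \<le> thr"
    using potential_nonneg potential_le_half_threshold[OF U m thr] by (auto simp: F_def)
  have et: "0 < exp t - 1" using t by simp
  have "measure_pmf.expectation (sample_set U q) (\<lambda>Us. (exp (potential m S Us) - 1) / (exp t - 1))
      = (measure_pmf.expectation (sample_set U q) (\<lambda>Us. exp (potential m S Us)) - 1) / (exp t - 1)"
    by (simp add: integrable_measure_pmf_finite[OF finite_set_pmf_sample_set[OF U]])
  also have "\<dots> \<le> (exp (2 * q * F) - 1) / (exp t - 1)"
    using expectation_exp_sum_sample_set_le[OF U q degree_weight_nonneg degree_weight_le_half] et
    unfolding potential_def F_def by (intro divide_right_mono) auto
  also have "\<dots> \<le> 2 * q * F * exp (q * thr) / (exp t - 1)"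
  proof (intro divide_right_mono)
    have "1 - 2 * q * F \<le> exp (- (2 * q * F))"
      using exp_ge_add_one_self[of "- (2 * q * F)"] by simp
    then have "exp (2 * q * F) - 1 \<le> 2 * q * F * exp (2 * q * F)"
      by (simp add: exp_minus field_simps)
    also have "\<dots> \<le> 2 * q * F * exp (q * thr)"
      using F q mult_left_mono[OF F(2) q(1)] by (intro mult_left_mono) (auto simp: ac_simps)
    finally show "exp (2 * q * F) - 1 \<le> 2 * q * F * exp (q * thr)" .
  qed (use et in simp)
  also have "\<dots> = overflow_rate q thr t * (q * F)"
    by (simp add: overflow_rate_def)
  finally show ?thesis by (simp add: F_def)
qed

definition iter_successor :: "nat \<Rightarrow> nat \<Rightarrow> (nat \<Rightarrow> nat set) \<Rightarrow>
    ((nat \<Rightarrow> nat set) \<Rightarrow> nat set \<Rightarrow> nat set) \<Rightarrow> nat set \<times> nat set \<times> nat \<Rightarrow> nat set \<Rightarrow>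
    nat set \<times> nat set \<times> nat" where
  "iter_successor n m S oc st Us = (case st of (U, SOL, sp) \<Rightarrow>
     let Opt = oc (\<lambda>i. S i \<inter> Us) Us
     in (U - (\<Union>i\<in>Opt. S i), SOL \<union> Opt, max sp (space_iter n m (SOL \<union> Opt) (\<lambda>i. S i \<inter> Us))))"

lemma iter_step_eq_map_pmf:
  "iter_step n m S q oc (U, SOL, sp) = map_pmf (iter_successor n m S oc (U, SOL, sp)) (sample_set U q)"
  by (simp add: iter_step_def iter_successor_def map_pmf_def Let_def)

context
  fixes n m :: nat and S :: "nat \<Rightarrow> nat set" and q thr t :: real and oc
  assumes m: "m \<ge> 1" and cover: "(\<Union>i\<in>{1..m}. S i) = {1..n}"
    and q: "0 \<le> q" "q \<le> 1" and opt_oc: "opt_oracle m oc" and t: "0 < t"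
begin

lemma iter_successor_invariant:
  assumes U: "finite U" "U \<subseteq> {1..n}" and SOL: "SOL \<subseteq> {1..m}"
    and thr: "\<forall>i\<in>{1..m}. real (card (S i \<inter> U)) \<le> thr" and sp: "real sp \<le> space_budget n m t"
    and Us: "Us \<subseteq> U" "potential m S Us \<le> t"
  obtains U' SOL' sp' where "iter_successor n m S oc (U, SOL, sp) Us = (U', SOL', sp')"
    "finite U'" "U' \<subseteq> {1..n}" "SOL' \<subseteq> {1..m}" "\<forall>i\<in>{1..m}. real (card (S i \<inter> U')) \<le> thr"
    "real sp' \<le> space_budget n m t" "potential m S U' \<le> potential m S U - potential m S Us"
proof -
  define Opt where "Opt = oc (\<lambda>i. S i \<inter> Us) Us"
  define U' where "U' = U - (\<Union>i\<in>Opt. S i)"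
  have Opt: "Opt \<subseteq> {1..m}" "Us \<subseteq> (\<Union>i\<in>Opt. S i)"
    using opt_oracle_covers_sample[OF opt_oc cover] Us(1) U(2) unfolding Opt_def by (meson order_trans)+
  then have U': "finite U'" "U' \<subseteq> {1..n}" "U' \<subseteq> U - Us"
    using U by (auto simp: U'_def)
  have "card (S i \<inter> U') \<le> card (S i \<inter> U)" for i
    using U(1) U'(3) by (intro card_mono) auto
  then have "\<forall>i\<in>{1..m}. real (card (S i \<inter> U')) \<le> thr"
    using thr by (meson of_nat_le_iff order_trans)
  moreover have "real (space_iter n m (SOL \<union> Opt) (\<lambda>i. S i \<inter> Us)) \<le> space_budget n m t"
    using space_iter_le_space_budget[of Us "SOL \<union> Opt" m S t n] finite_subset[OF Us(1) U(1)]
      SOL Opt(1) m Us(2) by simp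
  moreover have "potential m S U' \<le> potential m S U - potential m S Us"
    using potential_mono[OF _ U'(3)] potential_diff[OF U(1) Us(1)] U(1) by simp
  ultimately show ?thesis
    using that[of U' "SOL \<union> Opt"] U' SOL Opt(1) sp
    by (simp add: iter_successor_def U'_def Opt_def Let_def)
qed

lemma prob_run_iters_overflow_le:
  assumes "finite U" "U \<subseteq> {1..n}" "SOL \<subseteq> {1..m}"
    "\<forall>i\<in>{1..m}. real (card (S i \<inter> U)) \<le> thr" "real sp \<le> space_budget n m t"
  shows "measure_pmf.prob (run_iters n m S q oc j (U, SOL, sp))
           {st. space_budget n m t < real (snd (snd st))}
         \<le> overflow_rate q thr t * potential m S U"
  using assms
proof (induction j arbitrary: U SOL sp)
  case 0
  then show ?case
    using overflow_rate_nonneg[OF t] potential_nonneg by simp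
next
  case (Suc j)
  let ?overflow = "{st. space_budget n m t < real (snd (snd st))}"
  let ?c = "overflow_rate q thr t" and ?\<Phi> = "potential m S"
  let ?run = "\<lambda>Us. run_iters n m S q oc j (iter_successor n m S oc (U, SOL, sp) Us)"
  define h where "h Us = (exp (?\<Phi> Us) - 1) / (exp t - 1) + ?c * (?\<Phi> U - ?\<Phi> Us)" for Us
  have fin: "finite (set_pmf (sample_set U q))"
    using finite_set_pmf_sample_set[OF Suc.prems(1)] .
  have step: "measure_pmf.prob (?run Us) ?overflow \<le> h Us" if "Us \<in> set_pmf (sample_set U q)" for Us
  proof -
    have "Us \<subseteq> U" using set_pmf_sample_set_subset[OF that] .
    then have "0 \<le> ?c * (?\<Phi> U - ?\<Phi> Us)"
      using potential_mono[OF Suc.prems(1)] overflow_rate_nonneg[OF t] by simp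
    show ?thesis
    proof (cases "t \<le> ?\<Phi> Us")
      case True
      then have "1 \<le> (exp (?\<Phi> Us) - 1) / (exp t - 1)" using t by simp
      then show ?thesis
        using \<open>0 \<le> ?c * (?\<Phi> U - ?\<Phi> Us)\<close> measure_pmf.prob_le_1[of "?run Us" ?overflow]
        unfolding h_def by linarith
    next
      case False
      then have "?\<Phi> Us \<le> t" by simp
      then obtain U' SOL' sp' where succ: "iter_successor n m S oc (U, SOL, sp) Us = (U', SOL', sp')"
        and inv: "finite U'" "U' \<subseteq> {1..n}" "SOL' \<subseteq> {1..m}"
          "\<forall>i\<in>{1..m}. real (card (S i \<inter> U')) \<le> thr" "real sp' \<le> space_budget n m t"
        and drop: "?\<Phi> U' \<le> ?\<Phi> U - ?\<Phi> Us"
        by (rule iter_successor_invariant[OF Suc.prems \<open>Us \<subseteq> U\<close>])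
      have "measure_pmf.prob (?run Us) ?overflow \<le> ?c * ?\<Phi> U'"
        unfolding succ by (rule Suc.IH[OF inv])
      also have "\<dots> \<le> ?c * (?\<Phi> U - ?\<Phi> Us)"
        using drop overflow_rate_nonneg[OF t] by (intro mult_left_mono) auto
      also have "\<dots> \<le> h Us"
        using t potential_nonneg[of m S Us] by (simp add: h_def)
      finally show ?thesis .
    qed
  qed
  have "measure_pmf.prob (run_iters n m S q oc (Suc j) (U, SOL, sp)) ?overflow
      = measure_pmf.expectation (sample_set U q) (\<lambda>Us. measure_pmf.prob (?run Us) ?overflow)"
    by (simp add: run_iters_Suc_first iter_step_eq_map_pmf prob_bind_pmf del: run_iters.simps(2))
  also have "\<dots> \<le> measure_pmf.expectation (sample_set U q) h"
    by (intro integral_mono_AE AE_pmfI step integrable_measure_pmf_finite fin)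
  also have "\<dots> = measure_pmf.expectation (sample_set U q) (\<lambda>Us. (exp (?\<Phi> Us) - 1) / (exp t - 1))
      + ?c * (?\<Phi> U - q * ?\<Phi> U)"
  proof -
    have "measure_pmf.expectation (sample_set U q) (\<lambda>Us. ?\<Phi> Us) = q * ?\<Phi> U"
      unfolding potential_def by (rule expectation_sum_sample_set[OF Suc.prems(1) q])
    then show ?thesis
      unfolding h_def by (simp add: integrable_measure_pmf_finite[OF fin])
  qed
  also have "\<dots> \<le> ?c * ?\<Phi> U"
    using expectation_overflow_le[OF Suc.prems(1) m q t Suc.prems(4)] by (simp add: algebra_simps)
  finally show ?case .
qed

end

lemma overflow_rate_shifted_le:
  assumes M: "0 \<le> q * thr" and K: "0 < K"
  shows "overflow_rate q thr (q * thr + ln (K + 1)) \<le> 2 / K"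
proof -
  have pos: "0 < exp (q * thr) * K" using K by simp
  have le: "exp (q * thr) * K \<le> exp (q * thr + ln (K + 1)) - 1"
    using M K by (simp add: exp_add algebra_simps)
  have "2 * exp (q * thr) / (exp (q * thr + ln (K + 1)) - 1) \<le> 2 * exp (q * thr) / (exp (q * thr) * K)"
    by (rule divide_left_mono[OF le]) (use mult_pos_pos[OF less_le_trans[OF pos le] pos] in auto)
  then show ?thesis
    by (simp add: overflow_rate_def)
qed

lemma sample_rate_mult_threshold_le:
  fixes n m \<alpha> :: nat and \<epsilon> optt :: real
  assumes n: "n \<ge> 1" and m: "m \<ge> 1" and \<epsilon>: "0 < \<epsilon>"
  shows "min 1 (max 0 (16 * optt * log 2 (real m) / real n powr (1 - 1 / real \<alpha>)))
           * max 0 (real n / (\<epsilon> * optt))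
         \<le> 16 * log 2 (real m) * real n powr (1 / real \<alpha>) / \<epsilon>"
    (is "min 1 (max 0 ?p) * max 0 ?thr \<le> ?rhs")
proof (cases "?thr \<le> 0")
  case True
  then show ?thesis using m \<epsilon> by simp
next
  case False
  then have "0 < \<epsilon> * optt" using n by (simp add: not_le zero_less_divide_iff)
  then have "0 < optt" using \<epsilon> by (simp add: zero_less_mult_iff)
  then have "min 1 (max 0 ?p) \<le> ?p" using m by simp
  moreover have thr: "max 0 ?thr = ?thr" using False by simp
  ultimately have "min 1 (max 0 ?p) * max 0 ?thr \<le> ?p * ?thr"
    unfolding thr using False by (intro mult_right_mono) auto
  also have "\<dots> = 16 * log 2 (real m) * (real n / real n powr (1 - 1 / real \<alpha>)) / \<epsilon>"
    using \<open>0 < optt\<close> \<epsilon> by (simp add: field_simps)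
  also have "real n / real n powr (1 - 1 / real \<alpha>) = real n powr (1 / real \<alpha>)"
    using n by (simp add: powr_diff)
  finally show ?thesis .
qed

lemma wlen_le_log:
  assumes "real k + 1 \<le> N"
  shows "real (wlen k) \<le> log 2 N + 1"
proof -
  have "real (wlen k) = real_of_int \<lceil>log 2 (real k + 1)\<rceil>"
    unfolding wlen_def by simp
  also have "\<dots> \<le> log 2 (real k + 1) + 1" by linarith
  also have "log 2 (real k + 1) \<le> log 2 N" using assms by simp
  finally show ?thesis by simp
qed

lemma ln_le_log2:
  assumes "1 \<le> (x::real)"
  shows "ln x \<le> log 2 x"
proof -
  have "ln x * ln 2 \<le> ln x * 1"
    using assms ln_2_less_1 by (intro mult_left_mono) auto
  then show ?thesis
    unfolding log_def using ln_2_less_1 by (simp add: field_simps)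
qed

lemma ln_le_three_log2:
  assumes "n \<ge> 1"
  shows "ln (real n * (real m)^2 + 1) \<le> 3 * log 2 (real n + real m)"
proof -
  have "real n * (real m)^2 + 1 \<le> (real n + real m) ^ 3"
  proof -
    have "(real n + real m) ^ 3
        = real n ^ 3 + 3 * real n ^ 2 * real m + 3 * real n * (real m)^2 + (real m)^3"
      by (simp add: power3_eq_cube power2_eq_square algebra_simps)
    moreover have "1 \<le> real n ^ 3" using assms by simp
    moreover have "0 \<le> real n ^ 2 * real m" "0 \<le> real n * (real m)^2" "0 \<le> (real m)^3" by simp_all
    ultimately show ?thesis by linarith
  qed
  then have "ln (real n * (real m)^2 + 1) \<le> ln ((real n + real m) ^ 3)"
    using assms by (subst ln_le_cancel_iff) (auto simp: add_nonneg_pos)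
  also have "\<dots> = 3 * ln (real n + real m)"
    using assms by (simp add: ln_realpow)
  also have "\<dots> \<le> 3 * log 2 (real n + real m)"
    using ln_le_log2[of "real n + real m"] assms by simp
  finally show ?thesis .
qed

lemma space_budget_le:
  fixes n m :: nat and a e M :: real
  assumes n: "n \<ge> 1" and m: "m \<ge> 2" and a: "1 \<le> a" and e: "0 < e" "e \<le> 1"
    and M: "0 \<le> M" "M \<le> 16 * log 2 (real m) * a / e"
  shows "space_budget n m (M + ln (real n * (real m)^2 + 1))
         \<le> 100 * log 2 (real n + real m) ^ 2 * (real m * a / e + real n)"
proof -
  define L where "L = log 2 (real n + real m)"
  define r where "r = a / e"
  define X where "X = real m * r + real n"
  define t where "t = M + ln (real n * (real m)^2 + 1)"
  have L: "1 \<le> L" using n m by (simp add: L_def)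
  have r: "1 \<le> r" using a e by (simp add: r_def field_simps)
  have mX: "real m \<le> real m * r" "real m * r \<le> X" and nX: "real n \<le> X"
    using r mult_left_mono[OF r, of "real m"] by (auto simp: X_def)
  have "real (wlen m) \<le> L + 1" "real (wlen n) \<le> L + 1"
    using wlen_le_log[of m "real n + real m"] wlen_le_log[of n "real n + real m"] n m
    by (simp_all add: L_def)
  then have wm: "real (wlen m) \<le> 2 * L" and wn: "real (wlen n) \<le> 2 * L"
    using L by linarith+
  have "log 2 (real m) \<le> L" using m by (simp add: L_def)
  then have "16 * log 2 (real m) * r \<le> 16 * L * r"
    using r by (intro mult_right_mono) auto
  then have "M \<le> 16 * L * r"
    using M(2) by (simp add: r_def)
  moreover have "3 * L \<le> 3 * L * r"
    using mult_left_mono[OF r, of "3 * L"] L by simp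
  then have "ln (real n * (real m)^2 + 1) \<le> 3 * L * r"
    using ln_le_three_log2[OF n, of m] by (simp add: L_def)
  ultimately have t: "0 \<le> t" "t \<le> 19 * L * r"
    using M(1) by (auto simp: t_def)
  have "2 * real n \<le> 2 * L^2 * X"
    using nX L mult_mono[of 1 "L^2" "real n" X] by (simp add: one_le_power)
  moreover have "real m * real (wlen m) \<le> 2 * L^2 * X"
  proof -
    have "real m * real (wlen m) \<le> X * (2 * L)" using mX wm by (intro mult_mono) auto
    also have "\<dots> \<le> X * (2 * L^2)" using L nX by (intro mult_left_mono) (auto simp: power2_eq_square)
    finally show ?thesis by (simp add: algebra_simps)
  qed
  moreover have "(2 * real m * t + real m) * real (wlen n) \<le> 78 * L^2 * X"
  proof -
    have "2 * real m * t \<le> 38 * L * (real m * r)"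
      using t mult_left_mono[OF t(2), of "2 * real m"] by (simp add: algebra_simps)
    also have "\<dots> \<le> 38 * L * X" using mX L by (intro mult_left_mono) auto
    finally have "2 * real m * t + real m \<le> 39 * L * X"
      using mX L mult_mono[of 1 L "real m" X] by (simp add: algebra_simps)
    then have "(2 * real m * t + real m) * real (wlen n) \<le> (39 * L * X) * (2 * L)"
      using wn t L nX by (intro mult_mono) auto
    then show ?thesis by (simp add: power2_eq_square algebra_simps)
  qed
  moreover have "0 \<le> L^2 * X" using nX by simp
  ultimately have "space_budget n m t \<le> 100 * L^2 * X"
    unfolding space_budget_def by linarith
  then show ?thesis
    by (simp add: t_def L_def X_def r_def)
qed

lemma prob_alg1_space_le_space_budget:
  fixes n m \<alpha> :: nat and \<epsilon> optt :: real
  assumes n: "n \<ge> 1" and m: "m \<ge> 2" and cover: "(\<Union>i\<in>{1..m}. S i) = {1..n}"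
    and opt_oc: "opt_oracle m oc"
  defines "q \<equiv> min 1 (max 0 (16 * optt * log 2 (real m) / real n powr (1 - 1 / real \<alpha>)))"
    and "thr \<equiv> max 0 (real n / (\<epsilon> * optt))"
  shows "1 - 1 / (real m)^2 \<le> measure_pmf.prob (alg1_space n m S \<alpha> \<epsilon> optt oc)
           {s. real s \<le> space_budget n m (q * thr + ln (real n * (real m)^2 + 1))}"
proof -
  define t where "t = q * thr + ln (real n * (real m)^2 + 1)"
  let ?overflow = "{st :: nat set \<times> nat set \<times> nat. space_budget n m t < real (snd (snd st))}"
  obtain U0 SOL0 where step2: "step2 n m S (real n / (\<epsilon> * optt)) = (U0, SOL0)"
    by fastforce
  define R where "R = run_iters n m S q oc \<alpha> (U0, SOL0, space_step2 n m SOL0)"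
  note U0 = step2_result[OF step2]
  have "0 \<le> q * thr" "0 < real n * (real m)^2"
    using n m by (simp_all add: q_def thr_def)
  then have "0 < t" by (simp add: t_def add_nonneg_pos)
  have "measure_pmf.prob R ?overflow \<le> overflow_rate q thr t * potential m S U0"
    unfolding R_def
    by (rule prob_run_iters_overflow_le)
       (use m cover opt_oc \<open>0 < t\<close> U0 finite_subset[OF U0(1)] space_step2_le_space_budget
         in \<open>auto simp: q_def thr_def\<close>)
  also have "\<dots> \<le> 2 / (real n * (real m)^2) * (real n / 2)"
    using overflow_rate_shifted_le[OF \<open>0 \<le> q * thr\<close> \<open>0 < real n * (real m)^2\<close>]
      potential_le_half_card[of m S U0] card_mono[OF _ U0(1)] potential_nonneg
    by (intro mult_mono) (auto simp: t_def)
  also have "\<dots> = 1 / (real m)^2"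
    using n by simp
  finally have "1 - 1 / (real m)^2 \<le> measure_pmf.prob R (UNIV - ?overflow)"
    using measure_pmf.prob_compl[of ?overflow R] by simp
  also have "\<dots> = measure_pmf.prob (map_pmf (\<lambda>(U, SOL, sp). sp) R) {s. real s \<le> space_budget n m t}"
    by (auto intro!: arg_cong[where f = "measure_pmf.prob R"])
  finally show ?thesis
    using step2 by (simp add: alg1_space_def R_def t_def q_def thr_def)
qed

theorem lemma3p6:
  shows "\<exists>C::real. \<exists>k::nat. C > 0 \<and>
    (\<forall>(n::nat) (m::nat) (S::nat \<Rightarrow> nat set) (\<alpha>::nat) (\<epsilon>::real) (optt::real) oc.
       n \<ge> 1 \<longrightarrow> (\<forall>i\<in>{1..m}. S i \<subseteq> {1..n}) \<longrightarrow> (\<Union>i\<in>{1..m}. S i) = {1..n} \<longrightarrow>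
       \<alpha> \<ge> 1 \<longrightarrow> 0 < \<epsilon> \<longrightarrow> \<epsilon> \<le> 1 \<longrightarrow>
       real (opt_cover n m S) \<le> optt \<longrightarrow> optt \<le> (1 + \<epsilon>) * real (opt_cover n m S) \<longrightarrow>
       opt_oracle m oc \<longrightarrow>
       measure_pmf.prob (alg1_space n m S \<alpha> \<epsilon> optt oc)
         {s. real s \<le> C * (log 2 (real n + real m)) ^ k *
                        (real m * real n powr (1 / real \<alpha>) / \<epsilon> + real n)}
       \<ge> 1 - 1 / (real m)^2)"
proof (intro exI[of _ "100::real"] exI[of _ "2::nat"] conjI allI impI)
  fix n m :: nat and S :: "nat \<Rightarrow> nat set" and \<alpha> :: nat and \<epsilon> optt :: real and oc
  assume n: "n \<ge> 1" and cover: "(\<Union>i\<in>{1..m}. S i) = {1..n}"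
    and \<epsilon>: "0 < \<epsilon>" "\<epsilon> \<le> 1" and opt_oc: "opt_oracle m oc"
  let ?bound = "100 * (log 2 (real n + real m)) ^ 2 * (real m * real n powr (1 / real \<alpha>) / \<epsilon> + real n)"
  have "m \<noteq> 0" using n cover by auto
  show "1 - 1 / (real m)^2 \<le> measure_pmf.prob (alg1_space n m S \<alpha> \<epsilon> optt oc) {s. real s \<le> ?bound}"
  proof (cases "m = 1")
    case False
    then have m: "m \<ge> 2" using \<open>m \<noteq> 0\<close> by simp
    let ?t = "min 1 (max 0 (16 * optt * log 2 (real m) / real n powr (1 - 1 / real \<alpha>)))
              * max 0 (real n / (\<epsilon> * optt)) + ln (real n * (real m)^2 + 1)"
    have "space_budget n m ?t \<le> ?bound"
      using n m \<epsilon> sample_rate_mult_threshold_le[OF n _ \<epsilon>(1), where m = m and \<alpha> = \<alpha> and optt = optt]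
      by (intro space_budget_le) (auto intro: ge_one_powr_ge_zero)
    then have "measure_pmf.prob (alg1_space n m S \<alpha> \<epsilon> optt oc) {s. real s \<le> space_budget n m ?t}
        \<le> measure_pmf.prob (alg1_space n m S \<alpha> \<epsilon> optt oc) {s. real s \<le> ?bound}"
      by (intro measure_pmf.finite_measure_mono) auto
    then show ?thesis
      using prob_alg1_space_le_space_budget[OF n m cover opt_oc, where \<alpha> = \<alpha> and optt = optt and \<epsilon> = \<epsilon>]
      by linarith
  qed simp
qed simp

end
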